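(* Let $\alpha\in(0,1]$ and $\lambda\in\mathbb{C}$. There exists $0\ne\phi\in C^\infty[-1,1]$ solving \[ \Big(\lambda^2+\lambda-\frac{2\alpha\lambda}{1+\sqrt{1-\alpha}\,y}\Big)\phi+\Big(2\lambda+2-\frac{2\alpha}{1+\sqrt{1-\alpha}\,y}\Big)y\,\phi'+(y^2-1)\phi''=0 \] if and only if there exists $0\ne\phi\in C^\infty[-1,1]$ solving \[ (\lambda^2-\lambda)\phi+\big(2\lambda y+2\sqrt{1-\alpha}\big)\phi'+(y^2-1)\phi''=0. \] That is, the eigenvalues of $\mathbf{L}_\alpha$ coincide with the eigenvalues of $\mathbf{L}'_\alpha$.
   Context: $\lambda$ is called an eigenvalue of $\mathbf{L}_\alpha$ (the linearisation of $\partial_{tt}u-\partial_{xx}u=(\partial_tu)^2$ in self-similar variables around the solution $U_{\alpha,\infty,\kappa}(s,y)=\alpha s-\alpha\ln(1+\sqrt{1-\alpha}y)+\kappa$) if the first ODE has a nonzero $C^\infty[-1,1]$ solution, and an eigenvalue of $\mathbf{L}'_\alpha$ if the second ODE has a nonzero $C^\infty[-1,1]$ solution. *)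

theory Defs
  imports "HOL-Analysis.Analysis"
begin

text \<open>D is a tower of derivatives of a complex-valued function on the closed interval
  [-1,1]: D 0 agrees with the function there and D (Suc n) is the (one-sided at the
  endpoints) derivative of D n on [-1,1].  A function admitting such a tower is
  exactly a C-infinity function on [-1,1].\<close>
definition deriv_tower :: "(real \<Rightarrow> complex) \<Rightarrow> (nat \<Rightarrow> real \<Rightarrow> complex) \<Rightarrow> bool" where
  "deriv_tower \<phi> D \<longleftrightarrow>
     (\<forall>x\<in>{-1..1}. D 0 x = \<phi> x) \<and>
     (\<forall>n. \<forall>x\<in>{-1..1}. (D n has_vector_derivative D (Suc n) x) (at x within {-1..1}))"

definition smooth_on_cinterval :: "(real \<Rightarrow> complex) \<Rightarrow> bool" where
  "smooth_on_cinterval \<phi> \<longleftrightarrow> (\<exists>D. deriv_tower \<phi> D)"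

definition eigenvalue_L :: "real \<Rightarrow> complex \<Rightarrow> bool" where
  "eigenvalue_L \<alpha> \<mu> \<longleftrightarrow>
     (\<exists>\<phi> D. deriv_tower \<phi> D \<and> (\<exists>x\<in>{-1..1}. \<phi> x \<noteq> 0) \<and>
       (\<forall>y\<in>{-1..1}.
          (\<mu>^2 + \<mu> - 2 * of_real \<alpha> * \<mu> / of_real (1 + sqrt (1 - \<alpha>) * y)) * D 0 y
        + (2 * \<mu> + 2 - 2 * of_real \<alpha> / of_real (1 + sqrt (1 - \<alpha>) * y)) * of_real y * D 1 y
        + of_real (y^2 - 1) * D 2 y = 0))"

definition eigenvalue_L' :: "real \<Rightarrow> complex \<Rightarrow> bool" where
  "eigenvalue_L' \<alpha> \<mu> \<longleftrightarrow>
     (\<exists>\<phi> D. deriv_tower \<phi> D \<and> (\<exists>x\<in>{-1..1}. \<phi> x \<noteq> 0) \<and>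
       (\<forall>y\<in>{-1..1}.
          (\<mu>^2 - \<mu>) * D 0 y
        + (2 * \<mu> * of_real y + 2 * of_real (sqrt (1 - \<alpha>))) * D 1 y
        + of_real (y^2 - 1) * D 2 y = 0))"

end

theory Submission
  imports Defs
begin

text \<open>Write b = sqrt(1 - \<alpha>), so that \<alpha> = 1 - b^2 and 0 \<le> b < 1. The Moebius map
  z(y) = (y + b)/(1 + b y) is a smooth bijection of [-1,1] onto itself, with inverse
  x \<mapsto> (x - b)/(1 - b x), and the substitution \<phi>(y) = (1 + b y)^(-\<lambda>) \<psi>(z(y)) conjugates
  the two operators: the first one applied to \<phi> at y equals (1 + b y)^(-\<lambda>) (1 - b^2)/(1 + b y)^2
  times the second one applied to \<psi> at z(y). The factor never vanishes, and the substitution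
  and its inverse preserve smoothness on [-1,1], so nonzero smooth solutions correspond.\<close>

fun n_times_differentiable_on :: "nat \<Rightarrow> real set \<Rightarrow> (real \<Rightarrow> 'a::real_normed_vector) \<Rightarrow> bool"
  where
    "n_times_differentiable_on 0 S f \<longleftrightarrow> True"
  | "n_times_differentiable_on (Suc n) S f \<longleftrightarrow>
      (\<exists>f'. (\<forall>x\<in>S. (f has_vector_derivative f' x) (at x within S)) \<and> n_times_differentiable_on n S f')"

lemma n_times_differentiable_on_cong:
  assumes "n_times_differentiable_on n S f" and "\<And>x. x \<in> S \<Longrightarrow> f x = g x"
  shows "n_times_differentiable_on n S g"
proof (cases n)
  case 0
  then show ?thesis by simp
next
  case (Suc m)
  with assms(1) obtain f' where d: "\<forall>x\<in>S. (f has_vector_derivative f' x) (at x within S)"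
    and "n_times_differentiable_on m S f'" by auto
  moreover have "(g has_vector_derivative f' x) (at x within S)" if "x \<in> S" for x
    using has_vector_derivative_transform[OF that _ d[rule_format, OF that]] assms(2) by metis
  ultimately show ?thesis unfolding Suc by auto
qed

lemma n_times_differentiable_on_SucD:
  "n_times_differentiable_on (Suc n) S f \<Longrightarrow> n_times_differentiable_on n S f"
proof (induction n arbitrary: f)
  case 0
  then show ?case by simp
next
  case (Suc n)
  then obtain f' where "\<forall>x\<in>S. (f has_vector_derivative f' x) (at x within S)"
    and "n_times_differentiable_on (Suc n) S f'" by (metis n_times_differentiable_on.simps(2))
  with Suc.IH show ?case by auto
qed

lemma n_times_differentiable_on_SucI:
  assumes "n_times_differentiable_on n S f'"
    and "\<And>x. x \<in> S \<Longrightarrow> (f has_vector_derivative f' x) (at x within S)"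
  shows "n_times_differentiable_on (Suc n) S f"
  using assms by auto

lemma n_times_differentiable_on_const: "n_times_differentiable_on n S (\<lambda>x. c)"
  by (induction n arbitrary: c) (auto intro!: exI[of _ "\<lambda>x. 0"])

lemma n_times_differentiable_on_ident: "n_times_differentiable_on n S (\<lambda>x. x)"
  by (cases n) (auto intro!: exI[of _ "\<lambda>x. 1"] n_times_differentiable_on_const)

lemma n_times_differentiable_on_add:
  "n_times_differentiable_on n S f \<Longrightarrow> n_times_differentiable_on n S g \<Longrightarrow>
    n_times_differentiable_on n S (\<lambda>x. f x + g x)"
proof (induction n arbitrary: f g)
  case 0
  then show ?case by simp
next
  case (Suc n)
  then obtain f' g' where "\<forall>x\<in>S. (f has_vector_derivative f' x) (at x within S)"
    "\<forall>x\<in>S. (g has_vector_derivative g' x) (at x within S)"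
    "n_times_differentiable_on n S f'" "n_times_differentiable_on n S g'" by auto
  with Suc.IH show ?case
    by (auto intro!: exI[of _ "\<lambda>x. f' x + g' x"] has_vector_derivative_add)
qed

lemma n_times_differentiable_on_mult:
  fixes f g :: "real \<Rightarrow> 'a::real_normed_algebra"
  shows "n_times_differentiable_on n S f \<Longrightarrow> n_times_differentiable_on n S g \<Longrightarrow>
    n_times_differentiable_on n S (\<lambda>x. f x * g x)"
proof (induction n arbitrary: f g)
  case 0
  then show ?case by simp
next
  case (Suc n)
  then obtain f' g' where d: "\<forall>x\<in>S. (f has_vector_derivative f' x) (at x within S)"
    "\<forall>x\<in>S. (g has_vector_derivative g' x) (at x within S)"
    "n_times_differentiable_on n S f'" "n_times_differentiable_on n S g'" by auto
  have "n_times_differentiable_on n S f" "n_times_differentiable_on n S g"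
    using Suc.prems(1,2)[THEN n_times_differentiable_on_SucD] .
  with d have "n_times_differentiable_on n S (\<lambda>x. f x * g' x + f' x * g x)"
    by (intro n_times_differentiable_on_add Suc.IH)
  with d show ?case
    by (auto intro!: exI[of _ "\<lambda>x. f x * g' x + f' x * g x"] has_vector_derivative_mult)
qed

lemma n_times_differentiable_on_of_real:
  fixes f :: "real \<Rightarrow> real"
  shows "n_times_differentiable_on n S f \<Longrightarrow>
    n_times_differentiable_on n S (\<lambda>x. of_real (f x) :: 'a::real_normed_algebra_1)"
proof (induction n arbitrary: f)
  case 0
  then show ?case by simp
next
  case (Suc n)
  then obtain f' where "\<forall>x\<in>S. (f has_vector_derivative f' x) (at x within S)"
    "n_times_differentiable_on n S f'" by auto
  with Suc.IH show ?case
    by (auto intro!: exI[of _ "\<lambda>x. of_real (f' x)"] has_vector_derivative_of_real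
        simp: has_real_derivative_iff_has_vector_derivative)
qed

lemma n_times_differentiable_on_inverse:
  fixes h :: "real \<Rightarrow> real"
  shows "n_times_differentiable_on n S h \<Longrightarrow> (\<And>x. x \<in> S \<Longrightarrow> h x \<noteq> 0) \<Longrightarrow>
    n_times_differentiable_on n S (\<lambda>x. inverse (h x))"
proof (induction n arbitrary: h)
  case 0
  then show ?case by simp
next
  case (Suc n)
  then obtain h' where d: "\<forall>x\<in>S. (h has_vector_derivative h' x) (at x within S)"
    "n_times_differentiable_on n S h'" by auto
  have "n_times_differentiable_on n S (\<lambda>x. inverse (h x))"
    using Suc.IH[OF n_times_differentiable_on_SucD[OF Suc.prems(1)] Suc.prems(2)] .
  with d have "n_times_differentiable_on n S (\<lambda>x. -1 * (h' x * (inverse (h x) * inverse (h x))))"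
    by (intro n_times_differentiable_on_mult n_times_differentiable_on_const)
  moreover have "((\<lambda>x. inverse (h x)) has_vector_derivative -1 * (h' x * (inverse (h x) * inverse (h x))))
      (at x within S)" if "x \<in> S" for x
    using DERIV_inverse_fun[of h "h' x" x S] d that Suc.prems
    by (simp add: has_real_derivative_iff_has_vector_derivative power2_eq_square power_inverse)
  ultimately show ?case by (rule n_times_differentiable_on_SucI)
qed

lemma n_times_differentiable_on_ln:
  fixes h :: "real \<Rightarrow> real"
  assumes "n_times_differentiable_on n S h" and "\<And>x. x \<in> S \<Longrightarrow> 0 < h x"
  shows "n_times_differentiable_on n S (\<lambda>x. ln (h x))"
proof (cases n)
  case 0
  then show ?thesis by simp
next
  case (Suc m)
  with assms obtain h' where d: "\<forall>x\<in>S. (h has_vector_derivative h' x) (at x within S)"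
    "n_times_differentiable_on m S h'" by auto
  have "n_times_differentiable_on m S h"
    using assms(1) unfolding Suc by (rule n_times_differentiable_on_SucD)
  with d assms(2) have "n_times_differentiable_on m S (\<lambda>x. h' x * inverse (h x))"
    by (intro n_times_differentiable_on_mult n_times_differentiable_on_inverse) force+
  moreover have "((\<lambda>x. ln (h x)) has_vector_derivative h' x * inverse (h x)) (at x within S)"
    if "x \<in> S" for x
    using DERIV_chain2[OF DERIV_ln_divide, of h x "h' x" S] d that assms(2)
    by (simp add: has_real_derivative_iff_has_vector_derivative field_simps)
  ultimately show ?thesis unfolding Suc by (rule n_times_differentiable_on_SucI)
qed

lemma n_times_differentiable_on_exp:
  fixes k :: "real \<Rightarrow> 'a::{banach, real_normed_field}"
  shows "n_times_differentiable_on n S k \<Longrightarrow> n_times_differentiable_on n S (\<lambda>x. exp (k x))"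
proof (induction n arbitrary: k)
  case 0
  then show ?case by simp
next
  case (Suc n)
  then obtain k' where d: "\<forall>x\<in>S. (k has_vector_derivative k' x) (at x within S)"
    "n_times_differentiable_on n S k'" by auto
  have "n_times_differentiable_on n S k"
    using Suc.prems(1) by (rule n_times_differentiable_on_SucD)
  with d have "n_times_differentiable_on n S (\<lambda>x. k' x * exp (k x))"
    by (intro n_times_differentiable_on_mult Suc.IH)
  moreover have "((\<lambda>x. exp (k x)) has_vector_derivative k' x * exp (k x)) (at x within S)"
    if "x \<in> S" for x
    using field_vector_diff_chain_within[OF d(1)[rule_format, OF that], of exp "exp (k x)"]
    by (simp add: o_def has_field_derivative_at_within[OF DERIV_exp])
  ultimately show ?case by (rule n_times_differentiable_on_SucI)
qed

lemma n_times_differentiable_on_compose: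
  fixes z :: "real \<Rightarrow> real" and \<psi> :: "real \<Rightarrow> 'a::real_normed_algebra_1"
  shows "n_times_differentiable_on n S z \<Longrightarrow> z ` S \<subseteq> T \<Longrightarrow> n_times_differentiable_on n T \<psi> \<Longrightarrow>
    n_times_differentiable_on n S (\<lambda>x. \<psi> (z x))"
proof (induction n arbitrary: \<psi> z)
  case 0
  then show ?case by simp
next
  case (Suc n)
  then obtain z' \<psi>' where d: "\<forall>x\<in>S. (z has_vector_derivative z' x) (at x within S)"
    "\<forall>x\<in>T. (\<psi> has_vector_derivative \<psi>' x) (at x within T)"
    "n_times_differentiable_on n S z'" "n_times_differentiable_on n T \<psi>'" by auto
  have "n_times_differentiable_on n S z"
    using Suc.prems(1) by (rule n_times_differentiable_on_SucD)
  with d Suc.prems(2) have "n_times_differentiable_on n S (\<lambda>x. of_real (z' x) * \<psi>' (z x))"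
    by (intro n_times_differentiable_on_mult n_times_differentiable_on_of_real Suc.IH)
  moreover have "((\<lambda>x. \<psi> (z x)) has_vector_derivative of_real (z' x) * \<psi>' (z x)) (at x within S)"
    if "x \<in> S" for x
  proof -
    have "(\<psi> has_vector_derivative \<psi>' (z x)) (at (z x) within z ` S)"
      using d(2) Suc.prems(2) that by (blast intro: has_vector_derivative_within_subset)
    from vector_diff_chain_within[OF d(1)[rule_format, OF that] this] show ?thesis
      by (simp add: o_def scaleR_conv_of_real)
  qed
  ultimately show ?case by (rule n_times_differentiable_on_SucI)
qed

lemma deriv_tower_Suc_eqI:
  assumes "deriv_tower \<phi> D" and t: "t \<in> {-1..1}" and "\<And>s. s \<in> {-1..1} \<Longrightarrow> D n s = f s"
    and "(f has_vector_derivative f') (at t within {-1..1})"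
  shows "D (Suc n) t = f'"
proof -
  have "(D n has_vector_derivative D (Suc n) t) (at t within {-1..1})"
    using assms(1) t by (simp add: deriv_tower_def)
  moreover have "(D n has_vector_derivative f') (at t within {-1..1})"
    using has_vector_derivative_transform[OF t _ assms(4)] assms(3) by metis
  ultimately show ?thesis
    using vector_derivative_unique_within_closed_interval[of "-1" 1 t] t by (simp add: cbox_interval)
qed

lemma smooth_on_cinterval_iff:
  "smooth_on_cinterval f \<longleftrightarrow> (\<forall>n. n_times_differentiable_on n {-1..1} f)"
proof
  assume "smooth_on_cinterval f"
  then obtain D where D: "deriv_tower f D" by (auto simp: smooth_on_cinterval_def)
  have "n_times_differentiable_on n {-1..1} (D k)" for n k
  proof (induction n arbitrary: k)
    case 0
    then show ?case by simp
  next
    case (Suc n)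
    show ?case
      by (rule n_times_differentiable_on_SucI[OF Suc.IH[of "Suc k"]]) (use D in \<open>simp add: deriv_tower_def\<close>)
  qed
  with D show "\<forall>n. n_times_differentiable_on n {-1..1} f"
    by (auto simp: deriv_tower_def intro: n_times_differentiable_on_cong)
next
  assume smooth: "\<forall>n. n_times_differentiable_on n {-1..1} f"
  \<comment> \<open>One-sided derivatives on a nondegenerate closed interval are unique, so iterating
    \<open>vector_derivative\<close> produces the tower.\<close>
  define vd where "vd g x = vector_derivative g (at x within {-1..1})" for g :: "real \<Rightarrow> complex" and x
  define D where "D n = (vd ^^ n) f" for n
  have D_Suc: "D (Suc n) = vd (D n)" for n
    by (simp add: D_def)
  have vd: "vd g x = g'"
    if "(g has_vector_derivative g') (at x within {-1..1})" and "x \<in> {-1..1}" for g g' x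
    using vector_derivative_within_cbox[of "-1" 1 x g g'] that by (simp add: vd_def cbox_interval)
  have D_diff: "n_times_differentiable_on m {-1..1} (D n)" for m n
  proof (induction n arbitrary: m)
    case 0
    then show ?case using smooth by (simp add: D_def)
  next
    case (Suc n)
    obtain g' where "\<forall>x\<in>{-1..1}. (D n has_vector_derivative g' x) (at x within {-1..1})"
      and "n_times_differentiable_on m {-1..1} g'"
      using Suc.IH[of "Suc m"] by auto
    then show ?case
      unfolding D_Suc by (elim n_times_differentiable_on_cong) (auto intro: vd[symmetric])
  qed
  have "(D n has_vector_derivative D (Suc n) x) (at x within {-1..1})" if "x \<in> {-1..1}" for n x
  proof -
    obtain g' where "\<forall>x\<in>{-1..1}. (D n has_vector_derivative g' x) (at x within {-1..1})"
      using D_diff[of "Suc 0" n] by auto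
    with that have "(D n has_vector_derivative g' x) (at x within {-1..1})"
      by blast
    with that show ?thesis
      unfolding D_Suc by (simp add: vd)
  qed
  moreover have "D 0 = f"
    by (simp add: D_def)
  ultimately show "smooth_on_cinterval f"
    unfolding smooth_on_cinterval_def deriv_tower_def by metis
qed

lemma smooth_on_cinterval_mult:
  "smooth_on_cinterval f \<Longrightarrow> smooth_on_cinterval g \<Longrightarrow> smooth_on_cinterval (\<lambda>x. f x * g x)"
  unfolding smooth_on_cinterval_iff by (simp add: n_times_differentiable_on_mult)

definition mobius :: "real \<Rightarrow> real \<Rightarrow> real" where
  "mobius b y = (y + b) / (1 + b * y)"

definition weight :: "complex \<Rightarrow> real \<Rightarrow> real \<Rightarrow> complex" where
  "weight \<mu> b y = exp (- \<mu> * of_real (ln (1 + b * y)))"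

lemma mobius_denominator_pos:
  fixes b y :: real
  assumes "\<bar>b\<bar> < 1" and "y \<in> {-1..1}"
  shows "0 < 1 + b * y"
proof -
  have "\<bar>y\<bar> \<le> 1"
    using assms(2) by (simp add: abs_le_iff)
  then have "\<bar>b\<bar> * \<bar>y\<bar> \<le> \<bar>b\<bar>"
    by (simp add: mult_left_le)
  with assms(1) have "\<bar>b * y\<bar> < 1"
    by (simp add: abs_mult)
  then show ?thesis
    by (simp add: abs_less_iff)
qed

lemma mobius_in_interval:
  assumes b: "\<bar>b\<bar> < 1" and y: "y \<in> {-1..1}"
  shows "mobius b y \<in> {-1..1}"
proof -
  have "0 \<le> (1 - b) * (1 - y)" "0 \<le> (1 + b) * (1 + y)"
    using assms by auto
  then have "\<bar>y + b\<bar> \<le> 1 + b * y"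
    by (auto simp: algebra_simps)
  with mobius_denominator_pos[OF assms] show ?thesis
    by (auto simp: mobius_def abs_le_iff field_simps)
qed

lemma mobius_uminus_mobius:
  assumes b: "\<bar>b\<bar> < 1" and y: "y \<in> {-1..1}"
  shows "mobius (-b) (mobius b y) = y"
proof -
  have W: "1 + b * y \<noteq> 0"
    using mobius_denominator_pos[OF assms] by simp
  have "b^2 < 1"
    using b by (simp add: abs_square_less_1)
  then have b2: "1 - b^2 \<noteq> 0"
    by simp
  have "mobius (-b) (mobius b y) = (mobius b y - b) / (1 - b * mobius b y)"
    by (simp add: mobius_def)
  also have "\<dots> = (y * (1 - b^2) / (1 + b * y)) / ((1 - b^2) / (1 + b * y))"
    using W by (simp add: mobius_def field_simps power2_eq_square)
  also have "\<dots> = y"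
    using W b2 by simp
  finally show ?thesis .
qed

lemma mobius_image:
  assumes "\<bar>b\<bar> < 1"
  shows "mobius b ` {-1..1} = {-1..1}"
proof
  show "mobius b ` {-1..1} \<subseteq> {-1..1}"
    using mobius_in_interval[OF assms] by blast
  show "{-1..1} \<subseteq> mobius b ` {-1..1}"
  proof
    fix x :: real
    assume x: "x \<in> {-1..1}"
    have "\<bar>-b\<bar> < 1"
      using assms by simp
    from mobius_uminus_mobius[OF this x] mobius_in_interval[OF this x] show "x \<in> mobius b ` {-1..1}"
      by (metis minus_minus rev_image_eqI)
  qed
qed

lemma has_real_derivative_mobius:
  assumes "1 + b * t \<noteq> 0"
  shows "(mobius b has_real_derivative (1 - b^2) / (1 + b * t)^2) (at t within S)"
  unfolding mobius_def[abs_def]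
  by (rule derivative_eq_intros refl | use assms in force)+
    (use assms in \<open>simp add: field_simps power2_eq_square\<close>)

lemma smooth_on_cinterval_compose_mobius:
  assumes b: "\<bar>b\<bar> < 1" and f: "smooth_on_cinterval f"
  shows "smooth_on_cinterval (\<lambda>t. f (mobius b t))"
proof -
  have "n_times_differentiable_on n {-1..1} (\<lambda>y. (y + b) * inverse (1 + b * y))" for n
    using mobius_denominator_pos[OF b]
    by (intro n_times_differentiable_on_mult n_times_differentiable_on_add
        n_times_differentiable_on_inverse n_times_differentiable_on_ident
        n_times_differentiable_on_const) force+
  then have "n_times_differentiable_on n {-1..1} (mobius b)" for n
    by (rule n_times_differentiable_on_cong) (simp add: mobius_def divide_inverse)
  moreover have "mobius b ` {-1..1} \<subseteq> {-1..1}"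
    by (simp add: mobius_image[OF b])
  ultimately show ?thesis
    using f unfolding smooth_on_cinterval_iff by (blast intro: n_times_differentiable_on_compose)
qed

lemma weight_mult_weight_uminus: "weight \<mu> b y * weight (- \<mu>) b y = 1"
  by (simp add: weight_def exp_add[symmetric])

lemma has_vector_derivative_weight:
  assumes "0 < 1 + b * t"
  shows "(weight \<mu> b has_vector_derivative - \<mu> * of_real (b / (1 + b * t)) * weight \<mu> b t)
    (at t within S)"
proof -
  have "((\<lambda>t. ln (1 + b * t)) has_real_derivative b / (1 + b * t)) (at t within S)"
    by (rule derivative_eq_intros refl | use assms in force)+
  then have "((\<lambda>t. - \<mu> * of_real (ln (1 + b * t))) has_vector_derivative - \<mu> * of_real (b / (1 + b * t)))
      (at t within S)"
    by (intro has_vector_derivative_mult_right has_vector_derivative_of_real)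
  from field_vector_diff_chain_within[OF this, of exp] show ?thesis
    by (simp add: o_def weight_def[abs_def] has_field_derivative_at_within[OF DERIV_exp])
qed

lemma smooth_on_cinterval_weight:
  assumes "\<bar>b\<bar> < 1"
  shows "smooth_on_cinterval (weight \<mu> b)"
  unfolding smooth_on_cinterval_iff weight_def using mobius_denominator_pos[OF assms]
  by (intro allI n_times_differentiable_on_exp n_times_differentiable_on_mult
      n_times_differentiable_on_const n_times_differentiable_on_of_real n_times_differentiable_on_ln
      n_times_differentiable_on_add n_times_differentiable_on_ident) force+

lemma has_real_derivative_inverse_affine:
  assumes "1 + b * t \<noteq> 0"
  shows "((\<lambda>t. b / (1 + b * t)) has_real_derivative - ((b / (1 + b * t))^2)) (at t within S)"
  by (rule derivative_eq_intros refl | use assms in force)+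
    (use assms in \<open>simp add: field_simps power2_eq_square\<close>)

lemma has_real_derivative_mobius_deriv:
  assumes "1 + b * t \<noteq> 0"
  shows "((\<lambda>t. (1 - b^2) / (1 + b * t)^2) has_real_derivative
    - 2 * (b / (1 + b * t)) * ((1 - b^2) / (1 + b * t)^2)) (at t within S)"
  by (rule derivative_eq_intros refl | use assms in force)+
    (use assms in \<open>simp add: divide_simps eval_nat_numeral; algebra\<close>)

lemma has_vector_derivative_deriv_tower_mobius:
  assumes b: "\<bar>b\<bar> < 1" and D: "deriv_tower \<psi> D" and t: "t \<in> {-1..1}"
  shows "((\<lambda>t. D k (mobius b t)) has_vector_derivative
    of_real ((1 - b^2) / (1 + b * t)^2) * D (Suc k) (mobius b t)) (at t within {-1..1})"
proof -
  have "(D k has_vector_derivative D (Suc k) (mobius b t)) (at (mobius b t) within mobius b ` {-1..1})"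
    using D mobius_in_interval[OF b t] by (simp add: mobius_image[OF b] deriv_tower_def)
  from vector_diff_chain_within[OF has_real_derivative_mobius[THEN
        iffD1[OF has_real_derivative_iff_has_vector_derivative]] this]
  show ?thesis
    using mobius_denominator_pos[OF b t] by (simp add: o_def scaleR_conv_of_real)
qed

lemma deriv_tower_weighted_mobius:
  fixes \<mu> :: complex
  assumes b: "\<bar>b\<bar> < 1" and \<psi>: "deriv_tower \<psi> D\<psi>" and \<phi>: "deriv_tower \<phi> D\<phi>"
    and rel: "\<And>t. t \<in> {-1..1} \<Longrightarrow> D\<phi> 0 t = weight \<mu> b t * D\<psi> 0 (mobius b t)"
    and y: "y \<in> {-1..1}"
  defines "A \<equiv> \<lambda>t. complex_of_real (b / (1 + b * t))"
    and "Z \<equiv> \<lambda>t. complex_of_real ((1 - b^2) / (1 + b * t)^2)"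
    and "P \<equiv> \<lambda>k t. D\<psi> k (mobius b t)"
  shows "D\<phi> 1 y = weight \<mu> b y * (Z y * P 1 y - \<mu> * A y * P 0 y)"
    and "D\<phi> 2 y = weight \<mu> b y *
      ((Z y)^2 * P 2 y - 2 * (\<mu> + 1) * A y * Z y * P 1 y + \<mu> * (\<mu> + 1) * (A y)^2 * P 0 y)"
proof -
  let ?I = "{-1..1::real}"
  define G where "G = weight \<mu> b"
  have W: "1 + b * t \<noteq> 0" and pos: "0 < 1 + b * t" if "t \<in> ?I" for t
    using mobius_denominator_pos[OF b that] by simp_all
  have dG: "(G has_vector_derivative - \<mu> * A t * G t) (at t within ?I)" if "t \<in> ?I" for t
    using has_vector_derivative_weight[OF pos[OF that]] by (simp add: G_def A_def)
  have dA: "(A has_vector_derivative - ((A t)^2)) (at t within ?I)" if "t \<in> ?I" for t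
    using has_vector_derivative_of_real[OF has_real_derivative_inverse_affine[OF W[OF that]], where 'a = complex]
    by (simp add: A_def)
  have dZ: "(Z has_vector_derivative - 2 * A t * Z t) (at t within ?I)" if "t \<in> ?I" for t
    using has_vector_derivative_of_real[OF has_real_derivative_mobius_deriv[OF W[OF that]], where 'a = complex]
    by (simp add: A_def Z_def)
  have dP: "(P k has_vector_derivative Z t * P (Suc k) t) (at t within ?I)" if "t \<in> ?I" for k t
    using has_vector_derivative_deriv_tower_mobius[OF b \<psi> that] by (simp add: P_def Z_def)
  have D0: "D\<phi> 0 t = G t * P 0 t" if "t \<in> ?I" for t
    using rel[OF that] by (simp add: G_def P_def)
  have D1: "D\<phi> 1 t = G t * (Z t * P 1 t - \<mu> * A t * P 0 t)" if "t \<in> ?I" for t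
  proof -
    have "((\<lambda>t. G t * P 0 t) has_vector_derivative G t * (Z t * P 1 t - \<mu> * A t * P 0 t)) (at t within ?I)"
      by (rule has_vector_derivative_eq_rhs[OF has_vector_derivative_mult[OF dG[OF that] dP[OF that]]])
        (simp add: algebra_simps)
    from deriv_tower_Suc_eqI[OF \<phi> that D0 this] show ?thesis
      by simp
  qed
  then show "D\<phi> 1 y = weight \<mu> b y * (Z y * P 1 y - \<mu> * A y * P 0 y)"
    using y by (simp add: G_def)
  have "((\<lambda>t. Z t * P 1 t - \<mu> * A t * P 0 t) has_vector_derivative
      Z y * (Z y * P 2 y) - 2 * A y * Z y * P 1 y - \<mu> * (A y * (Z y * P 1 y) - (A y)^2 * P 0 y))
      (at y within ?I)"
    by (rule has_vector_derivative_eq_rhs[OF has_vector_derivative_diff[OF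
          has_vector_derivative_mult[OF dZ[OF y] dP[OF y]]
          has_vector_derivative_mult[OF has_vector_derivative_mult[OF
            has_vector_derivative_const dA[OF y]] dP[OF y]]]])
      (simp add: algebra_simps numeral_2_eq_2)
  from has_vector_derivative_mult[OF dG[OF y] this]
  have "((\<lambda>t. G t * (Z t * P 1 t - \<mu> * A t * P 0 t)) has_vector_derivative
      G y * ((Z y)^2 * P 2 y - 2 * (\<mu> + 1) * A y * Z y * P 1 y + \<mu> * (\<mu> + 1) * (A y)^2 * P 0 y))
      (at y within ?I)"
    by (rule has_vector_derivative_eq_rhs) (simp add: algebra_simps power2_eq_square)
  from deriv_tower_Suc_eqI[OF \<phi> y D1 this] show "D\<phi> 2 y = weight \<mu> b y *
      ((Z y)^2 * P 2 y - 2 * (\<mu> + 1) * A y * Z y * P 1 y + \<mu> * (\<mu> + 1) * (A y)^2 * P 0 y)"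
    by (simp add: G_def numeral_2_eq_2)
qed

definition L_ode :: "real \<Rightarrow> complex \<Rightarrow> (nat \<Rightarrow> real \<Rightarrow> complex) \<Rightarrow> real \<Rightarrow> complex" where
  "L_ode b \<mu> D y =
     (\<mu>^2 + \<mu> - 2 * of_real (1 - b^2) * \<mu> / of_real (1 + b * y)) * D 0 y
   + (2 * \<mu> + 2 - 2 * of_real (1 - b^2) / of_real (1 + b * y)) * of_real y * D 1 y
   + of_real (y^2 - 1) * D 2 y"

definition L'_ode :: "real \<Rightarrow> complex \<Rightarrow> (nat \<Rightarrow> real \<Rightarrow> complex) \<Rightarrow> real \<Rightarrow> complex" where
  "L'_ode b \<mu> D y = (\<mu>^2 - \<mu>) * D 0 y + (2 * \<mu> * of_real y + 2 * of_real b) * D 1 y + of_real (y^2 - 1) * D 2 y"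

text \<open>Keeping W = 1 + b y as a separate variable lets \<open>field_simps\<close> clear the denominators
  before the remaining polynomial identity is checked.\<close>

lemma conjugation_identity:
  fixes b y \<mu> G P0 P1 P2 W :: "'a::field"
  assumes W: "W = 1 + b * y" "W \<noteq> 0"
  shows "(\<mu>^2 + \<mu> - 2 * (1 - b^2) * \<mu> / W) * (G * P0)
     + (2 * \<mu> + 2 - 2 * (1 - b^2) / W) * y * (G * ((1 - b^2) / W^2 * P1 - \<mu> * (b / W) * P0))
     + (y^2 - 1) * (G * (((1 - b^2) / W^2)^2 * P2 - 2 * (\<mu> + 1) * (b / W) * ((1 - b^2) / W^2) * P1
         + \<mu> * (\<mu> + 1) * (b / W)^2 * P0))
   = G * ((1 - b^2) / W^2) * ((\<mu>^2 - \<mu>) * P0 + (2 * \<mu> * ((y + b) / W) + 2 * b) * P1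
       + (((y + b) / W)^2 - 1) * P2)"
  using W(2) by (simp add: field_simps) (unfold W(1), algebra)

lemma L_ode_conjugate:
  assumes b: "\<bar>b\<bar> < 1" and \<psi>: "deriv_tower \<psi> D\<psi>" and \<phi>: "deriv_tower \<phi> D\<phi>"
    and rel: "\<And>t. t \<in> {-1..1} \<Longrightarrow> D\<phi> 0 t = weight \<mu> b t * D\<psi> 0 (mobius b t)"
    and y: "y \<in> {-1..1}"
  shows "L_ode b \<mu> D\<phi> y = weight \<mu> b y * of_real ((1 - b^2) / (1 + b * y)^2) * L'_ode b \<mu> D\<psi> (mobius b y)"
proof -
  have "complex_of_real (1 + b * y) \<noteq> 0"
    unfolding of_real_eq_0_iff using mobius_denominator_pos[OF b y] by simp
  then have W: "1 + complex_of_real b * complex_of_real y \<noteq> 0"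
    by simp
  show ?thesis
    using conjugation_identity[OF refl W, of \<mu> "weight \<mu> b y"
        "D\<psi> 0 (mobius b y)" "D\<psi> 1 (mobius b y)" "D\<psi> 2 (mobius b y)"]
    by (simp only: L_ode_def L'_ode_def rel[OF y] deriv_tower_weighted_mobius[OF b \<psi> \<phi> rel y]
        mobius_def of_real_add of_real_mult of_real_divide of_real_power of_real_diff of_real_1)
qed

definition has_nonzero_smooth_solution :: "((nat \<Rightarrow> real \<Rightarrow> complex) \<Rightarrow> real \<Rightarrow> complex) \<Rightarrow> bool" where
  "has_nonzero_smooth_solution L \<longleftrightarrow>
     (\<exists>\<phi> D. deriv_tower \<phi> D \<and> (\<exists>x\<in>{-1..1}. \<phi> x \<noteq> 0) \<and> (\<forall>y\<in>{-1..1}. L D y = 0))"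

lemma eigenvalue_L_iff:
  assumes "\<alpha> \<le> 1"
  shows "eigenvalue_L \<alpha> \<mu> \<longleftrightarrow> has_nonzero_smooth_solution (L_ode (sqrt (1 - \<alpha>)) \<mu>)"
  using assms by (simp add: eigenvalue_L_def has_nonzero_smooth_solution_def L_ode_def)

lemma eigenvalue_L'_iff:
  "eigenvalue_L' \<alpha> \<mu> \<longleftrightarrow> has_nonzero_smooth_solution (L'_ode (sqrt (1 - \<alpha>)) \<mu>)"
  by (simp add: eigenvalue_L'_def has_nonzero_smooth_solution_def L'_ode_def)

lemma conjugate_solutions_iff:
  assumes b: "\<bar>b\<bar> < 1" and \<phi>: "deriv_tower \<phi> D\<phi>" and \<psi>: "deriv_tower \<psi> D\<psi>"
    and rel: "\<And>t. t \<in> {-1..1} \<Longrightarrow> \<phi> t = weight \<mu> b t * \<psi> (mobius b t)"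
  shows "(\<exists>x\<in>{-1..1}. \<phi> x \<noteq> 0) \<and> (\<forall>y\<in>{-1..1}. L_ode b \<mu> D\<phi> y = 0) \<longleftrightarrow>
    (\<exists>x\<in>{-1..1}. \<psi> x \<noteq> 0) \<and> (\<forall>x\<in>{-1..1}. L'_ode b \<mu> D\<psi> x = 0)"
proof -
  have ex: "(\<exists>x\<in>{-1..1}. Q x) \<longleftrightarrow> (\<exists>y\<in>{-1..1}. Q (mobius b y))"
    and all: "(\<forall>x\<in>{-1..1}. Q x) \<longleftrightarrow> (\<forall>y\<in>{-1..1}. Q (mobius b y))" for Q
    by (subst (1) mobius_image[OF b, symmetric], blast)+
  have "\<phi> y \<noteq> 0 \<longleftrightarrow> \<psi> (mobius b y) \<noteq> 0" if "y \<in> {-1..1}" for y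
    using rel[OF that] by (simp add: weight_def)
  moreover have "L_ode b \<mu> D\<phi> y = 0 \<longleftrightarrow> L'_ode b \<mu> D\<psi> (mobius b y) = 0" if y: "y \<in> {-1..1}" for y
  proof -
    have "D\<phi> 0 t = weight \<mu> b t * D\<psi> 0 (mobius b t)" if "t \<in> {-1..1}" for t
      using \<phi> \<psi> rel[OF that] that mobius_in_interval[OF b that] by (simp add: deriv_tower_def)
    note conj = L_ode_conjugate[OF b \<psi> \<phi> this y]
    have "b^2 < 1"
      using b by (simp add: abs_square_less_1)
    with mobius_denominator_pos[OF b y] have "(1 - b^2) / (1 + b * y)^2 \<noteq> 0"
      by simp
    then have "weight \<mu> b y * of_real ((1 - b^2) / (1 + b * y)^2) \<noteq> 0"
      by (metis exp_not_eq_zero mult_eq_0_iff of_real_eq_0_iff weight_def)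
    with conj show ?thesis
      by (metis mult_eq_0_iff)
  qed
  ultimately show ?thesis
    unfolding ex[of "\<lambda>x. \<psi> x \<noteq> 0"] all[of "\<lambda>x. L'_ode b \<mu> D\<psi> x = 0"] by auto
qed

lemma nonzero_smooth_solution_L_iff_L':
  assumes b: "\<bar>b\<bar> < 1"
  shows "has_nonzero_smooth_solution (L_ode b \<mu>) \<longleftrightarrow> has_nonzero_smooth_solution (L'_ode b \<mu>)"
proof
  assume "has_nonzero_smooth_solution (L_ode b \<mu>)"
  then obtain \<phi> D\<phi> where \<phi>: "deriv_tower \<phi> D\<phi>"
    and sol: "(\<exists>x\<in>{-1..1}. \<phi> x \<noteq> 0) \<and> (\<forall>y\<in>{-1..1}. L_ode b \<mu> D\<phi> y = 0)"
    by (auto simp: has_nonzero_smooth_solution_def)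
  define \<psi> where "\<psi> x = weight (- \<mu>) b (mobius (-b) x) * \<phi> (mobius (-b) x)" for x
  have "smooth_on_cinterval \<phi>"
    using \<phi> unfolding smooth_on_cinterval_def by blast
  then have "smooth_on_cinterval (\<lambda>y. weight (- \<mu>) b y * \<phi> y)"
    by (intro smooth_on_cinterval_mult smooth_on_cinterval_weight b)
  then have "smooth_on_cinterval \<psi>"
    unfolding \<psi>_def using smooth_on_cinterval_compose_mobius[of "-b"] b by simp
  then obtain D\<psi> where \<psi>: "deriv_tower \<psi> D\<psi>"
    by (auto simp: smooth_on_cinterval_def)
  have rel: "\<phi> t = weight \<mu> b t * \<psi> (mobius b t)" if "t \<in> {-1..1}" for t
    using weight_mult_weight_uminus[of \<mu> b t]
    by (simp add: \<psi>_def mobius_uminus_mobius[OF b that] mult.assoc[symmetric])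
  from conjugate_solutions_iff[OF b \<phi> \<psi> rel] sol \<psi> show "has_nonzero_smooth_solution (L'_ode b \<mu>)"
    by (auto simp: has_nonzero_smooth_solution_def)
next
  assume "has_nonzero_smooth_solution (L'_ode b \<mu>)"
  then obtain \<psi> D\<psi> where \<psi>: "deriv_tower \<psi> D\<psi>"
    and sol: "(\<exists>x\<in>{-1..1}. \<psi> x \<noteq> 0) \<and> (\<forall>x\<in>{-1..1}. L'_ode b \<mu> D\<psi> x = 0)"
    by (auto simp: has_nonzero_smooth_solution_def)
  define \<phi> where "\<phi> t = weight \<mu> b t * \<psi> (mobius b t)" for t
  have "smooth_on_cinterval \<psi>"
    using \<psi> unfolding smooth_on_cinterval_def by blast
  then have "smooth_on_cinterval \<phi>"
    unfolding \<phi>_def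
    by (intro smooth_on_cinterval_mult smooth_on_cinterval_weight[OF b] smooth_on_cinterval_compose_mobius[OF b])
  then obtain D\<phi> where \<phi>: "deriv_tower \<phi> D\<phi>"
    by (auto simp: smooth_on_cinterval_def)
  have rel: "\<phi> t = weight \<mu> b t * \<psi> (mobius b t)" if "t \<in> {-1..1}" for t
    by (simp add: \<phi>_def)
  from conjugate_solutions_iff[OF b \<phi> \<psi> rel] sol \<phi> show "has_nonzero_smooth_solution (L_ode b \<mu>)"
    by (auto simp: has_nonzero_smooth_solution_def)
qed

theorem corollary3p1:
  fixes \<alpha> :: real and \<mu> :: complex
  assumes "0 < \<alpha>" and "\<alpha> \<le> 1"
  shows "eigenvalue_L \<alpha> \<mu> \<longleftrightarrow> eigenvalue_L' \<alpha> \<mu>"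
proof -
  define b where "b = sqrt (1 - \<alpha>)"
  have b: "\<bar>b\<bar> < 1"
    using assms by (simp add: b_def)
  have "eigenvalue_L \<alpha> \<mu> \<longleftrightarrow> has_nonzero_smooth_solution (L_ode b \<mu>)"
    unfolding b_def by (rule eigenvalue_L_iff[OF assms(2)])
  also have "\<dots> \<longleftrightarrow> has_nonzero_smooth_solution (L'_ode b \<mu>)"
    by (rule nonzero_smooth_solution_L_iff_L'[OF b])
  also have "\<dots> \<longleftrightarrow> eigenvalue_L' \<alpha> \<mu>"
    unfolding b_def by (rule eigenvalue_L'_iff[symmetric])
  finally show ?thesis .
qed

end
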